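(* Let $\alpha\in(0,1)$ and let $\pi$ satisfy Condition 1 (with some $p\le n$). Then there exists a constant $C_1$, depending only on $\alpha$, $u_*$, $u_0$ (and on the constants $R,b,b',C'$ of Condition 1), such that for all $x$ with $|x|\ge C_1+\sqrt{2K(1+u_0)\log(n/p)}$ one has $m_x\ge\alpha$.
   Context: $\pi$ is a probability density on $(0,\infty)$ and $$m_x=\frac{\int_0^\infty u(1+u)^{-3/2}e^{\frac{x^2}{2}\frac{u}{1+u}}\pi(u)\,du}{\int_0^\infty (1+u)^{-1/2}e^{\frac{x^2}{2}\frac{u}{1+u}}\pi(u)\,du}$$ (the posterior mean of $\kappa=\sigma^2/(1+\sigma^2)$ given $X=x$ when $X\mid\theta\sim\mathcal N(\theta,1)$, $\theta\mid\sigma^2\sim\mathcal N(0,\sigma^2)$, $\sigma^2\sim\pi$). $\tau_n(p)=p/n$. Uniformly regularly varying at infinity: there exist $R,u_0>0$ with $1/R\le L(au)/L(u)\le R$ for all $a\in[1,2]$, $u\ge u_0$. Condition 1: for some $b\ge0$, $\pi(u)=L_n(u)e^{-bu}$, $L_n$ uniformly regularly varying at infinity with constants $R,u_0$ not depending on $n$; constants $C',b'>0$, $K\ge0$, $u_*\ge1$ with $C'\pi(u)\ge\tau_n(p)^Ke^{-b'u}$ for all $u\ge u_*$. *)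

theory Defs
  imports "HOL-Analysis.Analysis"
begin

text \<open>Posterior mean of kappa = sigma^2/(1+sigma^2) given X = x, for mixing density pi on (0,inf).\<close>
definition post_mean :: "(real \<Rightarrow> real) \<Rightarrow> real \<Rightarrow> real" where
  "post_mean \<pi> x =
     (LINT u:{0<..}|lborel. u * (1 + u) powr (-3/2) * exp (x\<^sup>2 / 2 * (u / (1 + u))) * \<pi> u)
   / (LINT u:{0<..}|lborel. (1 + u) powr (-1/2) * exp (x\<^sup>2 / 2 * (u / (1 + u))) * \<pi> u)"

definition prob_density_pos :: "(real \<Rightarrow> real) \<Rightarrow> bool" where
  "prob_density_pos \<pi> \<longleftrightarrow> (\<forall>u>0. \<pi> u \<ge> 0) \<and> set_integrable lborel {0<..} \<pi>
     \<and> (LINT u:{0<..}|lborel. \<pi> u) = 1"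

definition unif_reg_var :: "real \<Rightarrow> real \<Rightarrow> (real \<Rightarrow> real) \<Rightarrow> bool" where
  "unif_reg_var R u0 L \<longleftrightarrow>
     (\<forall>a u. 1 \<le> a \<and> a \<le> 2 \<and> u \<ge> u0 \<longrightarrow> 1 / R \<le> L (a * u) / L u \<and> L (a * u) / L u \<le> R)"

definition tau :: "nat \<Rightarrow> nat \<Rightarrow> real" where
  "tau n p = real p / real n"

definition condition1 :: "real \<Rightarrow> real \<Rightarrow> real \<Rightarrow> real \<Rightarrow> real \<Rightarrow> real \<Rightarrow> real \<Rightarrow> nat \<Rightarrow> nat \<Rightarrow> (real \<Rightarrow> real) \<Rightarrow> bool" where
  "condition1 R u0 b b' C' K ustar n p \<pi> \<longleftrightarrow>
     (\<exists>L. unif_reg_var R u0 L \<and> (\<forall>u>0. \<pi> u = L u * exp (- b * u)))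
     \<and> (\<forall>u\<ge>ustar. C' * \<pi> u \<ge> tau n p powr K * exp (- b' * u))"

end

theory Submission
  imports Defs
begin

text \<open>
  Write \<open>\<kappa> u = u / (1 + u)\<close> and \<open>g\<^sub>x u = (1 + u) powr (-1/2) * exp (x\<^sup>2 / 2 * \<kappa> u)\<close>.
  Since \<open>m\<^sub>x\<close> is the \<open>g\<^sub>x \<pi>\<close>-weighted average of \<open>\<kappa>\<close>, it suffices that
  \<open>\<integral> (\<kappa> u - \<alpha>) g\<^sub>x u \<pi> u du > 0\<close>.  Fix \<open>\<beta> = (1 + \<alpha>) / 2\<close>, \<open>V \<ge> u\<^sub>0\<close> with
  \<open>\<kappa> V \<ge> \<alpha>\<close> and \<open>U > V\<close> with \<open>\<kappa> U \<ge> \<beta>\<close>.  The integrand is negative only on \<open>(0, V]\<close>: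
  on \<open>(0, u\<^sub>0)\<close> it is at least \<open>- exp (x\<^sup>2 \<kappa> u\<^sub>0 / 2)\<close> against a mass at most one, and on
  \<open>[u\<^sub>0, V]\<close> at least \<open>- exp (x\<^sup>2 \<alpha> / 2)\<close>.  Uniform regular variation bounds the mass of
  \<open>[u\<^sub>0, V]\<close> by a constant times that of \<open>[U, 2U]\<close>, where the integrand is at least
  \<open>(\<beta> - \<alpha>) exp (x\<^sup>2 \<kappa> U / 2) / sqrt (1 + 2U)\<close>, so this window wins once \<open>x\<^sup>2\<close> is
  large.  On the window \<open>[|x|, 2|x|]\<close> the tail condition gives mass at least
  \<open>|x| \<tau>\<^sup>K exp (- 2 b' |x|) / C'\<close>, and the gain \<open>x\<^sup>2 (\<kappa> |x| - \<kappa> u\<^sub>0) / 2 \<approx> x\<^sup>2 / (2 (1 + u\<^sub>0))\<close>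
  outweighs \<open>K log (n/p) + 2 b' |x|\<close> as soon as \<open>|x| \<ge> C\<^sub>1 + sqrt (2 K (1 + u\<^sub>0) log (n/p))\<close>.
\<close>

section \<open>Set integrals\<close>

lemma set_integrable_bounded_mult:
  fixes f g :: "'a \<Rightarrow> real"
  assumes f: "set_integrable M A f" and g: "g \<in> borel_measurable M"
    and bound: "\<And>x. x \<in> A \<Longrightarrow> \<bar>g x\<bar> \<le> B"
  shows "set_integrable M A (\<lambda>x. g x * f x)"
proof (rule set_integrable_bound)
  show "set_integrable M A (\<lambda>x. B * f x)"
    using f by simp
  have "(\<lambda>x. indicator A x * f x) \<in> borel_measurable M"
    using f unfolding set_integrable_def by (simp add: borel_measurable_integrable)
  with g have "(\<lambda>x. g x * (indicator A x * f x)) \<in> borel_measurable M"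
    by (rule borel_measurable_times)
  then show "set_borel_measurable M A (\<lambda>x. g x * f x)"
    unfolding set_borel_measurable_def by (simp add: ac_simps)
  have "\<bar>g x\<bar> * \<bar>f x\<bar> \<le> \<bar>B\<bar> * \<bar>f x\<bar>" if "x \<in> A" for x
    using bound[OF that] by (intro mult_right_mono) auto
  then show "AE x in M. x \<in> A \<longrightarrow> norm (g x * f x) \<le> norm (B * f x)"
    by (simp add: abs_mult)
qed

lemma set_integral_indicator_subset:
  fixes f :: "'a \<Rightarrow> real"
  assumes "S \<subseteq> A"
  shows "set_integrable M A (\<lambda>u. indicator S u * f u) \<longleftrightarrow> set_integrable M S f"
    and "(LINT u:A|M. indicator S u * f u) = (LINT u:S|M. f u)"
proof -
  have "(\<lambda>u. indicator A u *\<^sub>R (indicator S u * f u)) = (\<lambda>u. indicator S u *\<^sub>R f u)"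
    using assms by (auto simp: fun_eq_iff indicator_def)
  then show "set_integrable M A (\<lambda>u. indicator S u * f u) \<longleftrightarrow> set_integrable M S f"
    and "(LINT u:A|M. indicator S u * f u) = (LINT u:S|M. f u)"
    unfolding set_integrable_def set_lebesgue_integral_def by simp_all
qed

lemma set_integral_Icc_const [simp]:
  fixes a b c :: real
  assumes "a \<le> b"
  shows "(LINT u:{a..b}|lborel. c) = c * (b - a)"
  using assms by (simp add: set_integral_const measure_def)

lemma set_integrable_Icc_const [simp]:
  "set_integrable lborel {a..b::real} (\<lambda>_. c :: real)"
  unfolding set_integrable_def real_scaleR_def
  by (intro integrable_mult_left integrable_real_indicator) (auto simp: emeasure_lborel_Icc_eq)

lemma set_integral_Icc_ge_const:
  fixes f :: "real \<Rightarrow> real"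
  assumes "a \<le> b" "set_integrable lborel {a..b} f" "\<And>u. u \<in> {a..b} \<Longrightarrow> c \<le> f u"
  shows "c * (b - a) \<le> (LINT u:{a..b}|lborel. f u)"
proof -
  have "(LINT u:{a..b}|lborel. c) \<le> (LINT u:{a..b}|lborel. f u)"
    using assms(2,3) by (intro set_integral_mono) auto
  with assms(1) show ?thesis
    by simp
qed

lemma set_integral_Icc_le_const:
  fixes f :: "real \<Rightarrow> real"
  assumes "a \<le> b" "set_integrable lborel {a..b} f" "\<And>u. u \<in> {a..b} \<Longrightarrow> f u \<le> c"
  shows "(LINT u:{a..b}|lborel. f u) \<le> c * (b - a)"
proof -
  have "(LINT u:{a..b}|lborel. f u) \<le> (LINT u:{a..b}|lborel. c)"
    using assms(2,3) by (intro set_integral_mono) auto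
  with assms(1) show ?thesis
    by simp
qed

lemma set_integral_Icc_comparison:
  fixes f :: "real \<Rightarrow> real"
  assumes "a \<le> b" "a' \<le> b'"
    and "set_integrable lborel {a..b} f" "set_integrable lborel {a'..b'} f"
    and "\<And>u t. u \<in> {a..b} \<Longrightarrow> t \<in> {a'..b'} \<Longrightarrow> c * f u \<le> f t"
  shows "c * (b' - a') * (LINT u:{a..b}|lborel. f u) \<le> (b - a) * (LINT t:{a'..b'}|lborel. f t)"
proof -
  have "c * f u * (b' - a') \<le> (LINT t:{a'..b'}|lborel. f t)" if "u \<in> {a..b}" for u
    using assms(2,4,5) that by (intro set_integral_Icc_ge_const) auto
  then have "(LINT u:{a..b}|lborel. c * (b' - a') * f u) \<le> (LINT t:{a'..b'}|lborel. f t) * (b - a)"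
    using assms(1,3) by (intro set_integral_Icc_le_const) (auto simp: ac_simps)
  then show ?thesis
    by (simp add: ac_simps)
qed

lemma set_integrable_density:
  assumes "prob_density_pos \<pi>" "S \<in> sets lborel" "S \<subseteq> {0<..}"
  shows "set_integrable lborel S \<pi>"
  using assms unfolding prob_density_pos_def by (auto intro: set_integrable_subset)

lemma set_integral_density_nonneg:
  assumes "prob_density_pos \<pi>" "S \<subseteq> {0<..}"
  shows "0 \<le> (LINT u:S|lborel. \<pi> u)"
  using assms unfolding prob_density_pos_def set_lebesgue_integral_def
  by (intro Bochner_Integration.integral_nonneg) (auto simp: indicator_def)

lemma set_integral_density_le_one:
  assumes "prob_density_pos \<pi>" "S \<in> sets lborel" "S \<subseteq> {0<..}"
  shows "(LINT u:S|lborel. \<pi> u) \<le> 1"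
proof -
  have "(LINT u:S|lborel. \<pi> u) = (LINT u:{0<..}|lborel. indicator S u * \<pi> u)"
    using set_integral_indicator_subset(2)[OF assms(3)] by simp
  also have "\<dots> \<le> (LINT u:{0<..}|lborel. \<pi> u)"
    using assms set_integrable_density[OF assms(1)] set_integral_indicator_subset(1)[OF assms(3)]
    unfolding prob_density_pos_def by (intro set_integral_mono) (auto simp: indicator_def)
  also have "\<dots> = 1"
    using assms(1) unfolding prob_density_pos_def by simp
  finally show ?thesis .
qed

section \<open>The likelihood and the posterior mean\<close>

lemma kappa_mono:
  fixes u v :: real
  assumes "0 \<le> v" "v \<le> u"
  shows "v / (1 + v) \<le> u / (1 + u)"
proof -
  have "v * (1 + u) \<le> u * (1 + v)"
    using assms by (simp add: ring_distribs mult.commute)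
  then show ?thesis
    using assms by (simp add: frac_le_eq divide_nonpos_pos)
qed

lemma le_kappa_of_odds_le:
  fixes a t :: real
  assumes "0 \<le> a" "a < 1" "a / (1 - a) \<le> t"
  shows "a \<le> t / (1 + t)"
proof -
  have "a / (1 - a) / (1 + a / (1 - a)) = a"
    using assms(2) by (simp add: field_simps)
  with kappa_mono[OF _ assms(3)] assms(1,2) show ?thesis
    by simp
qed

lemma exp_kappa_mono:
  fixes u v x :: real
  assumes "0 \<le> v" "v \<le> u"
  shows "exp (x\<^sup>2 / 2 * (v / (1 + v))) \<le> exp (x\<^sup>2 / 2 * (u / (1 + u)))"
proof -
  have "x\<^sup>2 / 2 * (v / (1 + v)) \<le> x\<^sup>2 / 2 * (u / (1 + u))"
    using kappa_mono[OF assms] by (rule mult_left_mono) simp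
  then show ?thesis
    by simp
qed

text \<open>The marginal density of \<open>X\<close> given \<open>\<sigma>\<^sup>2 = u\<close>, divided by the constant
  \<open>exp (- x\<^sup>2 / 2) / sqrt (2 * pi)\<close>.\<close>

definition likelihood :: "real \<Rightarrow> real \<Rightarrow> real" where
  "likelihood x u = (1 + u) powr (-1/2) * exp (x\<^sup>2 / 2 * (u / (1 + u)))"

lemma likelihood_eq: "u > -1 \<Longrightarrow> likelihood x u = exp (x\<^sup>2 / 2 * (u / (1 + u))) / sqrt (1 + u)"
  by (simp add: likelihood_def powr_minus_divide powr_half_sqrt)

lemma likelihood_pos: "u > -1 \<Longrightarrow> likelihood x u > 0"
  by (simp add: likelihood_eq)

lemma likelihood_le_exp:
  assumes "u \<ge> 0"
  shows "likelihood x u \<le> exp (x\<^sup>2 / 2 * (u / (1 + u)))"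
  using assms by (simp add: likelihood_eq divide_le_eq mult_le_cancel_left1)

lemma likelihood_ge:
  fixes u v w :: real
  assumes "0 \<le> v" "v \<le> u" "u \<le> w"
  shows "exp (x\<^sup>2 / 2 * (v / (1 + v))) / sqrt (1 + w) \<le> likelihood x u"
proof -
  have "exp (x\<^sup>2 / 2 * (v / (1 + v))) / sqrt (1 + w) \<le> exp (x\<^sup>2 / 2 * (u / (1 + u))) / sqrt (1 + u)"
    using exp_kappa_mono[OF assms(1,2)] assms by (intro frac_le) auto
  also have "\<dots> = likelihood x u"
    using assms by (simp add: likelihood_eq)
  finally show ?thesis .
qed

lemma set_integrable_likelihood:
  assumes "prob_density_pos \<pi>" "w \<in> borel_measurable lborel" "\<And>u. u > 0 \<Longrightarrow> \<bar>w u\<bar> \<le> M"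
  shows "set_integrable lborel {0<..} (\<lambda>u. w u * likelihood x u * \<pi> u)"
proof (rule set_integrable_bounded_mult)
  show "set_integrable lborel {0<..} \<pi>"
    using assms(1) unfolding prob_density_pos_def by simp
  show "(\<lambda>u. w u * likelihood x u) \<in> borel_measurable lborel"
    using assms(2) unfolding likelihood_def by measurable
  fix u :: real
  assume "u \<in> {0<..}"
  then have u: "u > 0"
    by simp
  have "x\<^sup>2 / 2 * (u / (1 + u)) \<le> x\<^sup>2 / 2 * 1"
    using u by (intro mult_left_mono) auto
  then have "exp (x\<^sup>2 / 2 * (u / (1 + u))) \<le> exp (x\<^sup>2 / 2)"
    by simp
  then have "likelihood x u \<le> exp (x\<^sup>2 / 2)"
    using likelihood_le_exp[of u x] u by linarith
  with u assms(3)[OF u] show "\<bar>w u * likelihood x u\<bar> \<le> M * exp (x\<^sup>2 / 2)"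
    by (simp add: abs_mult mult_mono likelihood_pos less_imp_le)
qed

lemma post_mean_likelihood:
  "post_mean \<pi> x =
     (LINT u:{0<..}|lborel. u / (1 + u) * likelihood x u * \<pi> u)
   / (LINT u:{0<..}|lborel. likelihood x u * \<pi> u)"
proof -
  have "u * (1 + u) powr (-3/2) = u / (1 + u) * (1 + u) powr (-1/2)" if "u > 0" for u :: real
    using that powr_diff[of "1 + u" "-1/2" 1] by simp
  then have "(LINT u:{0<..}|lborel. u * (1 + u) powr (-3/2) * exp (x\<^sup>2 / 2 * (u / (1 + u))) * \<pi> u)
      = (LINT u:{0<..}|lborel. u / (1 + u) * likelihood x u * \<pi> u)"
    unfolding likelihood_def by (intro set_lebesgue_integral_cong) simp_all
  moreover have "(LINT u:{0<..}|lborel. (1 + u) powr (-1/2) * exp (x\<^sup>2 / 2 * (u / (1 + u))) * \<pi> u)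
      = (LINT u:{0<..}|lborel. likelihood x u * \<pi> u)"
    unfolding likelihood_def ..
  ultimately show ?thesis
    unfolding post_mean_def by simp
qed

lemma post_mean_ge_of_excess_pos:
  assumes dens: "prob_density_pos \<pi>"
    and excess: "0 < (LINT u:{0<..}|lborel. (u / (1 + u) - \<alpha>) * likelihood x u * \<pi> u)"
  shows "\<alpha> \<le> post_mean \<pi> x"
proof -
  define N where "N = (LINT u:{0<..}|lborel. u / (1 + u) * likelihood x u * \<pi> u)"
  define D where "D = (LINT u:{0<..}|lborel. likelihood x u * \<pi> u)"
  have nonneg: "\<And>u. u > 0 \<Longrightarrow> 0 \<le> likelihood x u * \<pi> u"
    using dens unfolding prob_density_pos_def by (simp add: less_imp_le likelihood_pos)
  have intN: "set_integrable lborel {0<..} (\<lambda>u. u / (1 + u) * likelihood x u * \<pi> u)"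
    using dens by (rule set_integrable_likelihood[where M = 1]) auto
  have intD: "set_integrable lborel {0<..} (\<lambda>u. likelihood x u * \<pi> u)"
    using set_integrable_likelihood[OF dens, of "\<lambda>_. 1" 1] by simp
  have "(\<lambda>u. (u / (1 + u) - \<alpha>) * likelihood x u * \<pi> u)
      = (\<lambda>u. u / (1 + u) * likelihood x u * \<pi> u - \<alpha> * (likelihood x u * \<pi> u))"
    by (simp add: fun_eq_iff algebra_simps)
  then have "(LINT u:{0<..}|lborel. (u / (1 + u) - \<alpha>) * likelihood x u * \<pi> u) = N - \<alpha> * D"
    unfolding N_def D_def using intN intD by simp
  with excess have "\<alpha> * D < N"
    by simp
  moreover have "N \<le> D"
    unfolding N_def D_def
  proof (rule set_integral_mono[OF intN intD])
    fix u :: real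
    assume "u \<in> {0<..}"
    then show "u / (1 + u) * likelihood x u * \<pi> u \<le> likelihood x u * \<pi> u"
      using nonneg[of u] mult_left_le_one_le[of "likelihood x u * \<pi> u" "u / (1 + u)"]
      by (simp add: mult.assoc)
  qed
  moreover have "0 \<le> D"
    unfolding D_def set_lebesgue_integral_def using nonneg
    by (intro Bochner_Integration.integral_nonneg) (simp add: indicator_def)
  ultimately have "0 < D" "\<alpha> * D \<le> N"
    by (auto simp: order_less_le)
  then show ?thesis
    unfolding post_mean_likelihood N_def[symmetric] D_def[symmetric]
    by (simp add: le_divide_eq mult.commute)
qed

section \<open>Positivity of the excess integral\<close>

lemma excess_lower_bound:
  fixes \<alpha> u x m :: real
  assumes "0 \<le> \<alpha>" "\<alpha> \<le> 1" "0 \<le> u" "min (u / (1 + u)) \<alpha> \<le> m"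
  shows "- exp (x\<^sup>2 / 2 * m) \<le> (u / (1 + u) - \<alpha>) * likelihood x u"
proof -
  have lik: "0 < likelihood x u"
    using assms(3) by (simp add: likelihood_pos)
  show ?thesis
  proof (cases "\<alpha> \<le> u / (1 + u)")
    case True
    then have "0 \<le> (u / (1 + u) - \<alpha>) * likelihood x u"
      using lik by simp
    then show ?thesis
      using exp_gt_zero[of "x\<^sup>2 / 2 * m"] by linarith
  next
    case False
    have "0 \<le> u / (1 + u)"
      using assms(3) by simp
    then have "-1 * likelihood x u \<le> (u / (1 + u) - \<alpha>) * likelihood x u"
      using assms(2) lik by (intro mult_right_mono) auto
    moreover have "likelihood x u \<le> exp (x\<^sup>2 / 2 * (u / (1 + u)))"
      using assms(3) by (rule likelihood_le_exp)
    moreover have "x\<^sup>2 / 2 * (u / (1 + u)) \<le> x\<^sup>2 / 2 * m"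
      using False assms(4) by (intro mult_left_mono) auto
    then have "exp (x\<^sup>2 / 2 * (u / (1 + u))) \<le> exp (x\<^sup>2 / 2 * m)"
      by simp
    ultimately show ?thesis
      by linarith
  qed
qed

lemma excess_window_lower_bound:
  fixes \<alpha> \<beta> u v w x :: real
  assumes "0 \<le> v" "v \<le> u" "u \<le> w" "\<alpha> \<le> \<beta>" "\<beta> \<le> v / (1 + v)"
  shows "(\<beta> - \<alpha>) * (exp (x\<^sup>2 / 2 * (v / (1 + v))) / sqrt (1 + w))
    \<le> (u / (1 + u) - \<alpha>) * likelihood x u"
proof (rule mult_mono)
  show "\<beta> - \<alpha> \<le> u / (1 + u) - \<alpha>"
    using kappa_mono[OF assms(1,2)] assms(5) by simp
  show "exp (x\<^sup>2 / 2 * (v / (1 + v))) / sqrt (1 + w) \<le> likelihood x u"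
    using assms(1-3) by (rule likelihood_ge)
  show "0 \<le> u / (1 + u) - \<alpha>" "0 \<le> exp (x\<^sup>2 / 2 * (v / (1 + v))) / sqrt (1 + w)"
    using kappa_mono[OF assms(1,2)] assms by auto
qed

lemma excess_minorant:
  fixes \<alpha> \<beta> u0 V U X x u :: real
  assumes \<alpha>: "0 \<le> \<alpha>" "\<alpha> \<le> \<beta>" "\<beta> \<le> U / (1 + U)"
    and u0: "0 < u0" "u0 \<le> V" "\<alpha> \<le> V / (1 + V)"
    and U: "V < U" "2 * U < X" and u: "0 < u"
  shows "(\<beta> - \<alpha>) * (exp (x\<^sup>2 / 2 * (U / (1 + U))) / sqrt (1 + 2 * U)) * indicator {U..2*U} u
    + (\<beta> - \<alpha>) * (exp (x\<^sup>2 / 2 * (X / (1 + X))) / sqrt (1 + 2 * X)) * indicator {X..2*X} u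
    - exp (x\<^sup>2 / 2 * (u0 / (1 + u0))) * indicator {0<..<u0} u - exp (x\<^sup>2 / 2 * \<alpha>) * indicator {u0..V} u
    \<le> (u / (1 + u) - \<alpha>) * likelihood x u"
proof -
  have "U / (1 + U) \<le> 1"
    using u0 U by simp
  then have "\<alpha> \<le> 1"
    using \<alpha> by linarith
  note neg = excess_lower_bound[OF \<alpha>(1) this less_imp_le[OF u]]
  consider "u < u0" | "u0 \<le> u" "u \<le> V" | "U \<le> u" "u \<le> 2 * U" | "X \<le> u" "u \<le> 2 * X"
    | "V < u" "\<not> (U \<le> u \<and> u \<le> 2 * U)" "\<not> (X \<le> u \<and> u \<le> 2 * X)"
    by linarith
  then show ?thesis
  proof cases
    case 1
    then have "min (u / (1 + u)) \<alpha> \<le> u0 / (1 + u0)"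
      using kappa_mono[of u u0] u by auto
    then have "- exp (x\<^sup>2 / 2 * (u0 / (1 + u0))) \<le> (u / (1 + u) - \<alpha>) * likelihood x u"
      by (rule neg)
    with 1 u u0 U show ?thesis
      by (simp add: indicator_def)
  next
    case 2
    have "- exp (x\<^sup>2 / 2 * \<alpha>) \<le> (u / (1 + u) - \<alpha>) * likelihood x u"
      by (rule neg) simp
    with 2 u0 U show ?thesis
      by (simp add: indicator_def)
  next
    case 3
    then have "(\<beta> - \<alpha>) * (exp (x\<^sup>2 / 2 * (U / (1 + U))) / sqrt (1 + 2 * U)) \<le> (u / (1 + u) - \<alpha>) * likelihood x u"
      using \<alpha> u0 U by (intro excess_window_lower_bound) auto
    with 3 u0 U show ?thesis
      by (simp add: indicator_def)
  next
    case 4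
    have "\<beta> \<le> X / (1 + X)"
      using \<alpha>(3) kappa_mono[of U X] u0 U by simp
    with 4 have "(\<beta> - \<alpha>) * (exp (x\<^sup>2 / 2 * (X / (1 + X))) / sqrt (1 + 2 * X)) \<le> (u / (1 + u) - \<alpha>) * likelihood x u"
      using \<alpha> u0 U by (intro excess_window_lower_bound) auto
    with 4 u0 U show ?thesis
      by (simp add: indicator_def)
  next
    case 5
    then have "\<alpha> \<le> u / (1 + u)"
      using u0 kappa_mono[of V u] by simp
    then have "0 \<le> (u / (1 + u) - \<alpha>) * likelihood x u"
      using u likelihood_pos[of u x] by simp
    moreover have "u \<notin> {U..2*U}" "u \<notin> {X..2*X}" "u \<notin> {0<..<u0}" "u \<notin> {u0..V}"
      using 5 u0 by auto
    ultimately show ?thesis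
      by simp
  qed
qed

lemma set_integrable_excess:
  assumes "prob_density_pos \<pi>" "0 \<le> \<alpha>"
  shows "set_integrable lborel {0<..} (\<lambda>u. (u / (1 + u) - \<alpha>) * likelihood x u * \<pi> u)"
proof (rule set_integrable_likelihood[OF assms(1)])
  show "(\<lambda>u. u / (1 + u) - \<alpha>) \<in> borel_measurable lborel"
    by measurable
  show "\<bar>u / (1 + u) - \<alpha>\<bar> \<le> 1 + \<alpha>" if "u > 0" for u
  proof -
    have "0 \<le> u / (1 + u)" "u / (1 + u) \<le> 1"
      using that by auto
    then show ?thesis
      using assms(2) by (simp add: abs_le_iff)
  qed
qed

lemma excess_pos_of_mass_bounds:
  fixes \<alpha> \<beta> u0 V U X x :: real
  assumes dens: "prob_density_pos \<pi>"
    and \<alpha>: "0 \<le> \<alpha>" "\<alpha> \<le> \<beta>" "\<beta> \<le> U / (1 + U)"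
    and u0: "0 < u0" "u0 \<le> V" "\<alpha> \<le> V / (1 + V)"
    and U: "V < U" "2 * U < X"
    and mass: "exp (x\<^sup>2 / 2 * (u0 / (1 + u0))) + exp (x\<^sup>2 / 2 * \<alpha>) * (LINT u:{u0..V}|lborel. \<pi> u)
      < (\<beta> - \<alpha>) * (exp (x\<^sup>2 / 2 * (U / (1 + U))) / sqrt (1 + 2 * U)) * (LINT u:{U..2*U}|lborel. \<pi> u)
        + (\<beta> - \<alpha>) * (exp (x\<^sup>2 / 2 * (X / (1 + X))) / sqrt (1 + 2 * X)) * (LINT u:{X..2*X}|lborel. \<pi> u)"
  shows "0 < (LINT u:{0<..}|lborel. (u / (1 + u) - \<alpha>) * likelihood x u * \<pi> u)"
proof -
  define A where "A = {0<..<u0}"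
  define B where "B = {u0..V}"
  define W1 where "W1 = {U..2*U}"
  define W2 where "W2 = {X..2*X}"
  define cA where "cA = exp (x\<^sup>2 / 2 * (u0 / (1 + u0)))"
  define cB where "cB = exp (x\<^sup>2 / 2 * \<alpha>)"
  define p1 where "p1 = (\<beta> - \<alpha>) * (exp (x\<^sup>2 / 2 * (U / (1 + U))) / sqrt (1 + 2 * U))"
  define p2 where "p2 = (\<beta> - \<alpha>) * (exp (x\<^sup>2 / 2 * (X / (1 + X))) / sqrt (1 + 2 * X))"
  define m where "m S = (LINT u:S|lborel. \<pi> u)" for S
  define h where "h u = p1 * (indicator W1 u * \<pi> u) + p2 * (indicator W2 u * \<pi> u)
    - cA * (indicator A u * \<pi> u) - cB * (indicator B u * \<pi> u)" for u
  have "0 < U" "0 < X"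
    using u0 U by linarith+
  then have subsets: "A \<subseteq> {0<..}" "B \<subseteq> {0<..}" "W1 \<subseteq> {0<..}" "W2 \<subseteq> {0<..}"
    unfolding A_def B_def W1_def W2_def using u0 by auto
  have int: "set_integrable lborel {0<..} (\<lambda>u. indicator S u * \<pi> u)"
    "(LINT u:{0<..}|lborel. indicator S u * \<pi> u) = m S"
    if "S \<in> {A, B, W1, W2}" for S
    using that subsets set_integral_indicator_subset[of S "{0<..}"] set_integrable_density[OF dens]
    unfolding m_def A_def B_def W1_def W2_def by auto
  have "cA * m A \<le> cA"
    using set_integral_density_le_one[OF dens _ subsets(1)]
    unfolding m_def A_def cA_def by simp
  moreover have "cA + cB * m B < p1 * m W1 + p2 * m W2"
    using mass unfolding cA_def cB_def p1_def p2_def m_def B_def W1_def W2_def .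
  ultimately have "0 < p1 * m W1 + p2 * m W2 - cA * m A - cB * m B"
    by linarith
  also have "\<dots> = (LINT u:{0<..}|lborel. h u)"
    unfolding h_def using int by simp
  also have "\<dots> \<le> (LINT u:{0<..}|lborel. (u / (1 + u) - \<alpha>) * likelihood x u * \<pi> u)"
  proof (rule set_integral_mono)
    show "set_integrable lborel {0<..} h"
      unfolding h_def using int by simp
    show "set_integrable lborel {0<..} (\<lambda>u. (u / (1 + u) - \<alpha>) * likelihood x u * \<pi> u)"
      using dens \<alpha>(1) by (rule set_integrable_excess)
    fix u :: real
    assume u: "u \<in> {0<..}"
    then have "h u = (p1 * indicator W1 u + p2 * indicator W2 u - cA * indicator A u - cB * indicator B u) * \<pi> u"
      "0 \<le> \<pi> u"
      using dens unfolding h_def prob_density_pos_def by (auto simp: algebra_simps)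
    with u show "h u \<le> (u / (1 + u) - \<alpha>) * likelihood x u * \<pi> u"
      unfolding A_def B_def W1_def W2_def cA_def cB_def p1_def p2_def
      using excess_minorant[OF \<alpha> u0 U] by (simp add: mult_right_mono)
  qed
  finally show ?thesis .
qed

section \<open>Consequences of Condition 1\<close>

lemma unif_reg_var_nonzero:
  assumes "unif_reg_var R u0 L" "R > 0" "u0 \<le> u"
  shows "L u \<noteq> 0"
proof -
  have "1 / R \<le> L (1 * u) / L u"
    using assms(1,3) unfolding unif_reg_var_def by (metis order_refl one_le_numeral)
  with assms(2) show ?thesis
    by auto
qed

lemma unif_reg_var_ge_one:
  assumes "unif_reg_var R u0 L" "R > 0"
  shows "R \<ge> 1"
proof -
  have "L (1 * u0) / L u0 \<le> R"
    using assms(1) unfolding unif_reg_var_def by (metis order_refl one_le_numeral)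
  with unif_reg_var_nonzero[OF assms order_refl] show ?thesis
    by simp
qed

lemma unif_reg_var_step:
  assumes "unif_reg_var R u0 L" "R > 0" "u0 \<le> u" "0 < L u" "1 \<le> a" "a \<le> 2"
  shows "L u \<le> R * L (a * u)"
proof -
  have "1 / R \<le> L (a * u) / L u"
    using assms unfolding unif_reg_var_def by blast
  with assms(2,4) show ?thesis
    by (simp add: field_simps)
qed

lemma unif_reg_var_chain:
  assumes reg: "unif_reg_var R u0 L" and R: "R > 0" and nonneg: "\<And>v. u0 \<le> v \<Longrightarrow> 0 \<le> L v"
    and u: "0 < u0" "u0 \<le> u"
  shows "u \<le> t \<Longrightarrow> t \<le> 2 ^ k * u \<Longrightarrow> L u \<le> R ^ k * L t"
proof (induction k arbitrary: t)
  case 0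
  then show ?case
    by simp
next
  case (Suc k)
  have pos: "0 < L v" if "u0 \<le> v" for v
    using nonneg[OF that] unif_reg_var_nonzero[OF reg R that] by simp
  show ?case
  proof (cases "t \<le> 2 ^ k * u")
    case True
    then have "L u \<le> R ^ k * L t"
      using Suc by simp
    also have "\<dots> \<le> R ^ Suc k * L t"
      using unif_reg_var_ge_one[OF reg R] pos[of t] Suc.prems u
      by (intro mult_right_mono power_increasing) auto
    finally show ?thesis .
  next
    case False
    define s where "s = 2 ^ k * u"
    have s: "u \<le> s"
      using u unfolding s_def by (simp add: mult_le_cancel_right2)
    then have IH: "L u \<le> R ^ k * L s"
      using Suc.IH s_def by simp
    have s0: "u0 \<le> s" "0 < s"
      using s u by linarith+
    have "L s \<le> R * L (t / s * s)"
      using False Suc.prems s0(2)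
      by (intro unif_reg_var_step[OF reg R s0(1) pos[OF s0(1)]]) (auto simp: s_def field_simps)
    then have "R ^ k * L s \<le> R ^ Suc k * L t"
      using R s0 by (simp add: mult_left_mono mult.assoc)
    with IH show ?thesis
      by linarith
  qed
qed

lemma condition1_density_comparison:
  assumes cond: "condition1 R u0 b b' C' K ustar n p \<pi>" and dens: "prob_density_pos \<pi>"
    and "R > 0" "0 < u0" "0 \<le> b" "u0 \<le> u" "u \<le> t" "t \<le> 2 ^ k * u"
  shows "\<pi> u \<le> R ^ k * exp (b * t) * \<pi> t"
proof -
  obtain L where reg: "unif_reg_var R u0 L" and \<pi>L: "\<And>v. v > 0 \<Longrightarrow> \<pi> v = L v * exp (- b * v)"
    using cond unfolding condition1_def by blast
  have nonneg: "0 \<le> L v" if "u0 \<le> v" for v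
  proof -
    have "0 < v"
      using that assms(4) by linarith
    then have "0 \<le> \<pi> v"
      using dens unfolding prob_density_pos_def by simp
    with \<pi>L[OF \<open>0 < v\<close>] have "0 \<le> L v * exp (- b * v)"
      by simp
    then show ?thesis
      by (simp add: zero_le_mult_iff)
  qed
  have "exp (- b * u) \<le> 1"
    using assms(4-6) by simp
  then have "\<pi> u \<le> L u"
    using \<pi>L[of u] nonneg[of u] assms(4,6) by (simp add: mult_left_le)
  also have "\<dots> \<le> R ^ k * L t"
    using unif_reg_var_chain[OF reg assms(3) nonneg assms(4,6,7,8)] .
  also have "L t = exp (b * t) * \<pi> t"
    using \<pi>L[of t] assms(4,6,7) by (simp add: exp_minus_inverse)
  finally show ?thesis
    by (simp add: mult.assoc)
qed

lemma condition1_moderate_mass: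
  assumes cond: "condition1 R u0 b b' C' K ustar n p \<pi>" and dens: "prob_density_pos \<pi>"
    and "0 < R" "0 < u0" "0 \<le> b" "u0 \<le> V" "V < U" "2 * U \<le> 2 ^ k * u0"
  shows "exp (- b * (2 * U)) / R ^ k * U * (LINT u:{u0..V}|lborel. \<pi> u)
    \<le> V * (LINT t:{U..2*U}|lborel. \<pi> t)"
proof -
  define c where "c = exp (- b * (2 * U)) / R ^ k"
  have cmp: "c * \<pi> u \<le> \<pi> t" if "u \<in> {u0..V}" "t \<in> {U..2*U}" for u t
  proof -
    have "2 ^ k * u0 \<le> 2 ^ k * u"
      using that by simp
    moreover have "t \<le> 2 * U"
      using that(2) by simp
    ultimately have "t \<le> 2 ^ k * u"
      using assms(8) by linarith
    then have "\<pi> u \<le> R ^ k * exp (b * t) * \<pi> t"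
      using assms that by (intro condition1_density_comparison[OF cond dens]) auto
    also have "\<dots> \<le> R ^ k * exp (b * (2 * U)) * \<pi> t"
      using assms that dens unfolding prob_density_pos_def
      by (intro mult_right_mono mult_left_mono) (auto simp: mult_left_mono)
    finally show ?thesis
      using assms(3) unfolding c_def by (simp add: exp_minus field_simps)
  qed
  have mW: "0 \<le> (LINT t:{U..2*U}|lborel. \<pi> t)"
    using assms by (intro set_integral_density_nonneg[OF dens]) auto
  have "c * (2 * U - U) * (LINT u:{u0..V}|lborel. \<pi> u) \<le> (V - u0) * (LINT t:{U..2*U}|lborel. \<pi> t)"
    using assms cmp by (intro set_integral_Icc_comparison set_integrable_density[OF dens]) auto
  also have "\<dots> \<le> V * (LINT t:{U..2*U}|lborel. \<pi> t)"
    using mW assms by (intro mult_right_mono) auto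
  finally show ?thesis
    unfolding c_def by simp
qed

lemma tau_powr:
  assumes "1 \<le> p" "p \<le> n"
  shows "tau n p powr K = exp (- (K * ln (real n / real p)))"
  using assms by (simp add: tau_def powr_def ln_div algebra_simps)

lemma condition1_tail_lower_bound:
  assumes "condition1 R u0 b b' C' K ustar n p \<pi>" "C' > 0" "1 \<le> p" "p \<le> n" "ustar \<le> u"
  shows "exp (- (K * ln (real n / real p))) * exp (- b' * u) / C' \<le> \<pi> u"
proof -
  have "tau n p powr K * exp (- b' * u) \<le> C' * \<pi> u"
    using assms(1,5) unfolding condition1_def by blast
  with assms(2) show ?thesis
    unfolding tau_powr[OF assms(3,4)] by (simp add: divide_le_eq mult.commute)
qed

lemma condition1_tail_mass:
  assumes "condition1 R u0 b b' C' K ustar n p \<pi>" "prob_density_pos \<pi>"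
    and "0 < b'" "0 < C'" "1 \<le> p" "p \<le> n" "ustar \<le> X" "0 < X"
  shows "X * (exp (- (K * ln (real n / real p))) * exp (- b' * (2 * X)) / C')
    \<le> (LINT u:{X..2*X}|lborel. \<pi> u)"
proof -
  have "exp (- (K * ln (real n / real p))) * exp (- b' * (2 * X)) / C' \<le> \<pi> u"
    if "u \<in> {X..2*X}" for u
  proof -
    have "exp (- b' * (2 * X)) \<le> exp (- b' * u)"
      using that assms(3) by simp
    then have "exp (- (K * ln (real n / real p))) * exp (- b' * (2 * X)) / C'
        \<le> exp (- (K * ln (real n / real p))) * exp (- b' * u) / C'"
      using assms(4) by (intro divide_right_mono mult_left_mono) auto
    also have "\<dots> \<le> \<pi> u"
      using that assms by (intro condition1_tail_lower_bound) auto
    finally show ?thesis .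
  qed
  then have "exp (- (K * ln (real n / real p))) * exp (- b' * (2 * X)) / C' * (2 * X - X)
      \<le> (LINT u:{X..2*X}|lborel. \<pi> u)"
    using assms(8) by (intro set_integral_Icc_ge_const set_integrable_density[OF assms(2)]) auto
  then show ?thesis
    by (simp add: mult.commute)
qed

section \<open>Large \<bar>x\<bar>\<close>

lemma moderate_mass_term_bound:
  fixes \<alpha> \<beta> c U V x mB mW :: real
  assumes "0 < c" "0 < U" "0 \<le> V" "0 \<le> mW" "c * U * mB \<le> V * mW"
    and "\<alpha> < \<beta>" "\<beta> \<le> U / (1 + U)"
    and "2 * V * sqrt (1 + 2 * U) / (c * U * (\<beta> - \<alpha>)\<^sup>2) \<le> x\<^sup>2"
  shows "exp (x\<^sup>2 / 2 * \<alpha>) * mB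
    \<le> (\<beta> - \<alpha>) * (exp (x\<^sup>2 / 2 * (U / (1 + U))) / sqrt (1 + 2 * U)) * mW"
proof -
  define d where "d = \<beta> - \<alpha>"
  define Q where "Q = V * sqrt (1 + 2 * U) / (c * U * d)"
  have d: "0 < d"
    using assms(6) unfolding d_def by simp
  have "2 * Q / d \<le> x\<^sup>2"
    using assms(8) unfolding Q_def d_def by (simp add: power2_eq_square mult.assoc)
  then have "Q \<le> x\<^sup>2 / 2 * d"
    using d by (simp add: divide_le_eq mult.commute)
  also have "\<dots> \<le> exp (x\<^sup>2 / 2 * d)"
    using exp_ge_add_one_self[of "x\<^sup>2 / 2 * d"] by linarith
  also have "\<dots> \<le> exp (x\<^sup>2 / 2 * (U / (1 + U) - \<alpha>))"
    using assms(7) unfolding d_def by (simp add: mult_left_mono)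
  finally have "exp (x\<^sup>2 / 2 * \<alpha>) * Q \<le> exp (x\<^sup>2 / 2 * \<alpha>) * exp (x\<^sup>2 / 2 * (U / (1 + U) - \<alpha>))"
    by simp
  also have "\<dots> = exp (x\<^sup>2 / 2 * (U / (1 + U)))"
    unfolding mult_exp_exp using assms(2) by (simp add: field_simps)
  finally have "exp (x\<^sup>2 / 2 * \<alpha>) * Q \<le> exp (x\<^sup>2 / 2 * (U / (1 + U)))" .
  then have bound: "d * (exp (x\<^sup>2 / 2 * \<alpha>) * Q / sqrt (1 + 2 * U)) * mW
      \<le> d * (exp (x\<^sup>2 / 2 * (U / (1 + U))) / sqrt (1 + 2 * U)) * mW"
    using d assms(2,4) by (intro mult_right_mono mult_left_mono divide_right_mono) auto
  have "mB \<le> V * mW / (c * U)"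
    using assms(1,2,5) by (simp add: le_divide_eq mult.commute)
  then have "exp (x\<^sup>2 / 2 * \<alpha>) * mB \<le> exp (x\<^sup>2 / 2 * \<alpha>) * (V * mW / (c * U))"
    by (rule mult_left_mono) simp
  also have "\<dots> = d * (exp (x\<^sup>2 / 2 * \<alpha>) * Q / sqrt (1 + 2 * U)) * mW"
    using d assms(1,2) unfolding Q_def by (simp add: field_simps)
  finally show ?thesis
    using bound unfolding d_def by linarith
qed

lemma half_le_div_sqrt:
  fixes X :: real
  assumes "1 \<le> X"
  shows "1 / 2 \<le> X / sqrt (1 + 2 * X)"
proof -
  have "X * 1 \<le> X * X" "(2 * X)\<^sup>2 = 4 * (X * X)"
    using assms by (auto simp: power2_eq_square intro: mult_left_mono)
  then have "sqrt (1 + 2 * X) \<le> 2 * X"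
    using assms by (intro real_le_lsqrt) linarith+
  moreover have "0 < sqrt (1 + 2 * X)"
    using assms by simp
  ultimately show ?thesis
    by (simp add: le_divide_eq)
qed

lemma exponent_gap_lower_bound:
  fixes X C s u0 b' klog :: real
  assumes u0: "0 < u0" and b': "0 < b'" and C: "2 * ((1 + u0) * (1 + 4 * b')) \<le> C"
    and s: "0 \<le> s" "s\<^sup>2 = 2 * klog * (1 + u0)" and X: "C + s \<le> X" "1 \<le> X"
  shows "C\<^sup>2 / (4 * (1 + u0)) \<le> X\<^sup>2 / 2 * (X / (1 + X)) - klog - 2 * b' * X - X\<^sup>2 / 2 * (u0 / (1 + u0))"
proof -
  define D where "D = (1 + u0) * (1 + 4 * b')"
  define Y where "Y = C + s"
  have D: "0 < D"
    unfolding D_def using u0 b' by simp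
  have gap: "X\<^sup>2 / 2 * (X / (1 + X)) - X\<^sup>2 / 2 * (u0 / (1 + u0)) = X\<^sup>2 / (2 * (1 + u0)) - X\<^sup>2 / (2 * (1 + X))"
    using X(2) u0 by (simp add: field_simps)
  have "X\<^sup>2 / (1 + X) \<le> X"
    using X(2) by (simp add: divide_le_eq power2_eq_square)
  then have "(X\<^sup>2 / (1 + X)) / 2 \<le> X / 2"
    by (rule divide_right_mono) simp
  then have linear: "X\<^sup>2 / (2 * (1 + X)) \<le> X / 2"
    by (simp only: divide_divide_eq_left mult.commute)
  have drift: "D * X / (2 * (1 + u0)) = X / 2 + 2 * b' * X"
    unfolding D_def using u0 by (simp add: field_simps)
  have "Y\<^sup>2 - D * Y \<le> X\<^sup>2 - D * X"
  proof -
    have "0 \<le> (X - Y) * (X + Y - D)"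
      using X C s D unfolding Y_def D_def by (intro mult_nonneg_nonneg) auto
    then show ?thesis
      by (simp add: algebra_simps power2_eq_square)
  qed
  moreover have "s\<^sup>2 + C\<^sup>2 / 2 \<le> Y\<^sup>2 - D * Y"
  proof -
    have "0 \<le> C * (C / 2 - D)" "0 \<le> s * (2 * C - D)"
      using C s D unfolding D_def by (intro mult_nonneg_nonneg; simp)+
    then show ?thesis
      unfolding Y_def by (simp add: algebra_simps power2_eq_square)
  qed
  ultimately have "(s\<^sup>2 + C\<^sup>2 / 2) / (2 * (1 + u0)) \<le> (X\<^sup>2 - D * X) / (2 * (1 + u0))"
    using u0 by (intro divide_right_mono) auto
  moreover have "(s\<^sup>2 + C\<^sup>2 / 2) / (2 * (1 + u0)) = klog + C\<^sup>2 / (4 * (1 + u0))"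
    using s(2) u0 by (simp add: field_simps)
  moreover have "(X\<^sup>2 - D * X) / (2 * (1 + u0)) = X\<^sup>2 / (2 * (1 + u0)) - D * X / (2 * (1 + u0))"
    by (simp add: diff_divide_distrib)
  ultimately show ?thesis
    using gap linear drift by linarith
qed

lemma tail_mass_term_bound:
  fixes x C s u0 b' C' d klog m :: real
  assumes u0: "0 < u0" and b': "0 < b'" and C': "0 < C'" and d: "0 < d"
    and s: "0 \<le> s" "s\<^sup>2 = 2 * klog * (1 + u0)" and x: "C + s \<le> \<bar>x\<bar>"
    and C: "1 \<le> C" "2 * ((1 + u0) * (1 + 4 * b')) \<le> C" "8 * (1 + u0) * C' / d \<le> C"
    and m: "\<bar>x\<bar> * (exp (- klog) * exp (- b' * (2 * \<bar>x\<bar>)) / C') \<le> m"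
  shows "exp (x\<^sup>2 / 2 * (u0 / (1 + u0)))
    < d * (exp (x\<^sup>2 / 2 * (\<bar>x\<bar> / (1 + \<bar>x\<bar>))) / sqrt (1 + 2 * \<bar>x\<bar>)) * m"
proof -
  define X where "X = \<bar>x\<bar>"
  define E where "E = X\<^sup>2 / 2 * (X / (1 + X)) - klog - 2 * b' * X - X\<^sup>2 / 2 * (u0 / (1 + u0))"
  have X: "1 \<le> X" "x\<^sup>2 = X\<^sup>2"
    using x C s unfolding X_def by auto
  have "C / (4 * (1 + u0)) \<le> C\<^sup>2 / (4 * (1 + u0))"
    using C(1) u0 by (intro divide_right_mono) (auto simp: power2_eq_square)
  moreover have "2 * C' / d \<le> C / (4 * (1 + u0))"
    using C(3) u0 d by (simp add: field_simps)
  moreover have "C\<^sup>2 / (4 * (1 + u0)) \<le> E"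
    unfolding E_def using exponent_gap_lower_bound[OF u0 b' C(2) s] x X(1) unfolding X_def by blast
  moreover have "E < exp E"
    using exp_ge_add_one_self[of E] by linarith
  ultimately have expE: "2 * C' / d < exp E"
    by linarith
  have "d / C' * (1 / 2) * (2 * C' / d) < d / C' * (X / sqrt (1 + 2 * X)) * exp E"
    using half_le_div_sqrt[OF X(1)] expE d C' by (intro mult_le_less_imp_less mult_left_mono) auto
  then have "1 < d / C' * (X / sqrt (1 + 2 * X)) * exp E"
    using d C' by simp
  then have "1 * exp (x\<^sup>2 / 2 * (u0 / (1 + u0)))
      < d / C' * (X / sqrt (1 + 2 * X)) * exp E * exp (x\<^sup>2 / 2 * (u0 / (1 + u0)))"
    by (rule mult_strict_right_mono) simp
  also have "\<dots> = d / C' * (X / sqrt (1 + 2 * X)) * (exp E * exp (x\<^sup>2 / 2 * (u0 / (1 + u0))))"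
    by (simp only: mult.assoc)
  also have "exp E * exp (x\<^sup>2 / 2 * (u0 / (1 + u0)))
      = exp (x\<^sup>2 / 2 * (X / (1 + X))) * (exp (- klog) * exp (- b' * (2 * X)))"
    unfolding E_def X(2) mult_exp_exp by (simp add: algebra_simps)
  also have "d / C' * (X / sqrt (1 + 2 * X)) * (exp (x\<^sup>2 / 2 * (X / (1 + X))) * (exp (- klog) * exp (- b' * (2 * X))))
      = d * (exp (x\<^sup>2 / 2 * (X / (1 + X))) / sqrt (1 + 2 * X)) * (X * (exp (- klog) * exp (- b' * (2 * X)) / C'))"
    by (simp add: field_simps)
  also have "\<dots> \<le> d * (exp (x\<^sup>2 / 2 * (X / (1 + X))) / sqrt (1 + 2 * X)) * m"
    using m d X(1) unfolding X_def by (intro mult_left_mono) auto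
  finally show ?thesis
    unfolding X_def by simp
qed

lemma post_mean_ge_under_condition1:
  fixes \<alpha> \<beta> u0 V U R b b' C' ustar K C x :: real and k n p :: nat
  assumes \<alpha>: "0 \<le> \<alpha>" "\<alpha> < \<beta>" "\<beta> \<le> U / (1 + U)"
    and u0: "0 < u0" "u0 \<le> V" "\<alpha> \<le> V / (1 + V)" "V < U" "2 * U \<le> 2 ^ k * u0"
    and pos: "0 < R" "0 \<le> b" "0 < b'" "0 < C'"
    and np: "1 \<le> p" "p \<le> n" "0 \<le> K"
    and \<pi>: "prob_density_pos \<pi>" "condition1 R u0 b b' C' K ustar n p \<pi>"
    and C: "1 \<le> C" "ustar \<le> C" "2 * U < C" "2 * ((1 + u0) * (1 + 4 * b')) \<le> C"
      "8 * (1 + u0) * C' / (\<beta> - \<alpha>) \<le> C"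
      "2 * V * sqrt (1 + 2 * U) / (exp (- b * (2 * U)) / R ^ k * U * (\<beta> - \<alpha>)\<^sup>2) \<le> C"
    and x: "C + sqrt (2 * K * (1 + u0) * ln (real n / real p)) \<le> \<bar>x\<bar>"
  shows "\<alpha> \<le> post_mean \<pi> x"
proof -
  define s where "s = sqrt (2 * K * (1 + u0) * ln (real n / real p))"
  have "0 \<le> ln (real n / real p)"
    using np by simp
  then have s: "0 \<le> s" "s\<^sup>2 = 2 * (K * ln (real n / real p)) * (1 + u0)"
    unfolding s_def using np u0 by (simp_all add: ac_simps)
  have "C \<le> \<bar>x\<bar>"
    using x s unfolding s_def by linarith
  moreover have "\<bar>x\<bar> * 1 \<le> \<bar>x\<bar> * \<bar>x\<bar>"
    using \<open>C \<le> \<bar>x\<bar>\<close> C(1) by (intro mult_left_mono) auto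
  then have "\<bar>x\<bar> \<le> x\<^sup>2"
    by (simp add: power2_eq_square)
  ultimately have x_large: "2 * U < \<bar>x\<bar>" "ustar \<le> \<bar>x\<bar>" "C \<le> x\<^sup>2"
    using C by linarith+
  have "0 < U"
    using u0 by linarith
  have mW: "0 \<le> (LINT t:{U..2*U}|lborel. \<pi> t)"
    using \<open>0 < U\<close> by (intro set_integral_density_nonneg[OF \<pi>(1)]) auto
  have moderate:
    "exp (x\<^sup>2 / 2 * \<alpha>) * (LINT u:{u0..V}|lborel. \<pi> u)
      \<le> (\<beta> - \<alpha>) * (exp (x\<^sup>2 / 2 * (U / (1 + U))) / sqrt (1 + 2 * U)) * (LINT t:{U..2*U}|lborel. \<pi> t)"
    using \<alpha> u0 pos C(6) x_large \<open>0 < U\<close>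
    by (intro moderate_mass_term_bound[OF _ _ _ mW condition1_moderate_mass[OF \<pi>(2,1)]]) auto
  have tail:
    "exp (x\<^sup>2 / 2 * (u0 / (1 + u0)))
      < (\<beta> - \<alpha>) * (exp (x\<^sup>2 / 2 * (\<bar>x\<bar> / (1 + \<bar>x\<bar>))) / sqrt (1 + 2 * \<bar>x\<bar>)) * (LINT u:{\<bar>x\<bar>..2*\<bar>x\<bar>}|lborel. \<pi> u)"
    using u0 pos \<alpha> s x C(1,4,5) condition1_tail_mass[OF \<pi>(2,1)] np x_large \<open>0 < U\<close>
    unfolding s_def by (intro tail_mass_term_bound) auto
  have "0 < (LINT u:{0<..}|lborel. (u / (1 + u) - \<alpha>) * likelihood x u * \<pi> u)"
    using moderate tail
    by (intro excess_pos_of_mass_bounds[OF \<pi>(1) \<alpha>(1) less_imp_le[OF \<alpha>(2)] \<alpha>(3) u0(1-4) x_large(1)])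
      linarith
  with \<pi>(1) show ?thesis
    by (rule post_mean_ge_of_excess_pos)
qed

theorem lemma1:
  fixes \<alpha> R u0 b b' C' ustar :: real
  assumes "0 < \<alpha>" "\<alpha> < 1"
    and "R > 0" "u0 > 0" "b \<ge> 0" "b' > 0" "C' > 0" "ustar \<ge> 1"
  shows "\<exists>C1::real. \<forall>(n::nat) (p::nat) (K::real) (\<pi>::real \<Rightarrow> real) (x::real).
           1 \<le> p \<and> p \<le> n \<and> K \<ge> 0 \<and> prob_density_pos \<pi>
           \<and> condition1 R u0 b b' C' K ustar n p \<pi>
           \<and> \<bar>x\<bar> \<ge> C1 + sqrt (2 * K * (1 + u0) * ln (real n / real p))
           \<longrightarrow> post_mean \<pi> x \<ge> \<alpha>"
proof -
  define \<beta> where "\<beta> = (1 + \<alpha>) / 2"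
  define V where "V = max u0 (\<alpha> / (1 - \<alpha>))"
  define U where "U = V + \<beta> / (1 - \<beta>)"
  have \<beta>: "\<alpha> < \<beta>" "\<beta> < 1"
    unfolding \<beta>_def using assms(2) by auto
  have V: "u0 \<le> V" "\<alpha> \<le> V / (1 + V)"
    unfolding V_def using assms(1,2) by (auto intro: le_kappa_of_odds_le)
  have U: "V < U" "\<beta> \<le> U / (1 + U)"
    unfolding U_def using \<beta> assms(1,4) V(1) by (auto intro: le_kappa_of_odds_le)
  obtain k :: nat where k: "2 * U / u0 < 2 ^ k"
    using real_arch_pow[of 2 "2 * U / u0"] by auto
  then have "2 * U \<le> 2 ^ k * u0"
    using assms(4) by (simp add: divide_less_eq)
  define C where "C = 1 + ustar + 2 * U + 2 * ((1 + u0) * (1 + 4 * b')) + 8 * (1 + u0) * C' / (\<beta> - \<alpha>)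
    + 2 * V * sqrt (1 + 2 * U) / (exp (- b * (2 * U)) / R ^ k * U * (\<beta> - \<alpha>)\<^sup>2)"
  have "0 < U"
    using V(1) U(1) assms(4) by linarith
  then have "0 \<le> 8 * (1 + u0) * C' / (\<beta> - \<alpha>)"
    "0 \<le> 2 * V * sqrt (1 + 2 * U) / (exp (- b * (2 * U)) / R ^ k * U * (\<beta> - \<alpha>)\<^sup>2)"
    "0 \<le> 2 * ((1 + u0) * (1 + 4 * b'))"
    using assms(3,4,6,7) \<beta>(1) V(1) by simp_all
  then have C: "1 \<le> C" "ustar \<le> C" "2 * U < C" "2 * ((1 + u0) * (1 + 4 * b')) \<le> C"
    "8 * (1 + u0) * C' / (\<beta> - \<alpha>) \<le> C"
    "2 * V * sqrt (1 + 2 * U) / (exp (- b * (2 * U)) / R ^ k * U * (\<beta> - \<alpha>)\<^sup>2) \<le> C"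
    unfolding C_def using assms(8) \<open>0 < U\<close> by linarith+
  show ?thesis
    by (intro exI[of _ C] allI impI)
      (blast intro: post_mean_ge_under_condition1[OF less_imp_le[OF assms(1)] \<beta>(1) U(2) assms(4) V U(1)
          \<open>2 * U \<le> 2 ^ k * u0\<close> assms(3,5,6,7) _ _ _ _ _ C])
qed

end
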